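(* Let $\mathbf{M}\in\mathbb{R}^{n\times n}$ be a symmetric positive definite matrix, let $\boldsymbol{\varphi}\in\mathbb{R}^n$, and let $\mathbf{H}=(H_1,\dots,H_m)^\intercal:\mathbb{R}^n\to\mathbb{R}^m$ be differentiable at $\boldsymbol{\varphi}$, with Jacobian $\nabla\mathbf{H}(\boldsymbol{\varphi})\in\mathbb{R}^{m\times n}$ whose $i$-th row is $\nabla H_i(\boldsymbol{\varphi})$. Fix an index $k\in\{1,\dots,m\}$ and let $\mathbf{H}^{-k}:\mathbb{R}^n\to\mathbb{R}^{m-1}$ denote $\mathbf{H}$ with its $k$-th component removed. Suppose $(\Delta\boldsymbol{\varphi},\Delta\boldsymbol{\gamma})\in\mathbb{R}^n\times\mathbb{R}^m$ solves $$\mathbf{M}\Delta\boldsymbol{\varphi}=\nabla\mathbf{H}(\boldsymbol{\varphi})^\intercal\Delta\boldsymbol{\gamma},\qquad \mathbf{H}(\boldsymbol{\varphi})+\nabla\mathbf{H}(\boldsymbol{\varphi})\Delta\boldsymbol{\varphi}=0,$$ and $(\Delta\tilde{\boldsymbol{\varphi}},\Delta\tilde{\boldsymbol{\gamma}})\in\mathbb{R}^n\times\mathbb{R}^{m-1}$ solves $$\mathbf{M}\Delta\tilde{\boldsymbol{\varphi}}=\nabla\mathbf{H}^{-k}(\boldsymbol{\varphi})^\intercal\Delta\tilde{\boldsymbol{\gamma}},\qquad \mathbf{H}^{-k}(\boldsymbol{\varphi})+\nabla\mathbf{H}^{-k}(\boldsymbol{\varphi})\Delta\tilde{\boldsymbol{\varphi}}=0.$$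 Then, with $\Delta\gamma_k$ the $k$-th component of $\Delta\boldsymbol{\gamma}$, $$\Delta\gamma_k\cdot\bigl(H_k(\boldsymbol{\varphi})+\nabla H_k(\boldsymbol{\varphi})\Delta\tilde{\boldsymbol{\varphi}}\bigr)\le 0.$$
   Context: The second system is obtained from the first by removing the $k$-th linearized constraint $H_k(\boldsymbol{\varphi})+\nabla H_k(\boldsymbol{\varphi})\Delta\boldsymbol{\varphi}=0$ (and its multiplier); $\Delta\boldsymbol{\gamma}$ are the Lagrange multipliers of the constraints in the first system. In the paper $\mathbf{M}$ is a mass matrix, hence symmetric positive definite. *)

theory Defs
  imports "HOL-Analysis.Analysis"
begin

definition sym_pos_def_matrix :: "real ^'n ^'n \<Rightarrow> bool" where
  "sym_pos_def_matrix M \<longleftrightarrow> transpose M = M \<and> (\<forall>x. x \<noteq> 0 \<longrightarrow> x \<bullet> (M *v x) > 0)"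

end

theory Submission
  imports Defs
begin

text \<open>The difference e = d\<phi> - dt\<phi> of the two primal steps is annihilated by every constraint gradient
  except the k-th one. Testing the first stationarity equation minus the second against e,
  all multipliers but the k-th drop out, so that
  e \<bullet> M e = d\<gamma> k (G k \<bullet> e) = - d\<gamma> k (H k \<phi> + G k \<bullet> dt\<phi>),
  and positivity of M gives the sign.\<close>

lemma sym_pos_def_matrix_quadratic_form_nonneg:
  assumes "sym_pos_def_matrix M"
  shows "0 \<le> x \<bullet> (M *v x)"
  using assms unfolding sym_pos_def_matrix_def
  by (cases "x = 0") (auto intro: less_imp_le)

lemma inner_sum_scaleR_orthogonal:
  assumes "\<And>i. i \<in> I \<Longrightarrow> G i \<bullet> e = 0"
  shows "e \<bullet> (\<Sum>i\<in>I. c i *\<^sub>R G i) = 0"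
  using assms by (simp add: inner_sum_right inner_commute)

lemma inner_sum_scaleR_orthogonal_except:
  assumes "finite I" "k \<in> I" "\<And>i. i \<in> I - {k} \<Longrightarrow> G i \<bullet> e = 0"
  shows "e \<bullet> (\<Sum>i\<in>I. c i *\<^sub>R G i) = c k * (G k \<bullet> e)"
proof -
  have "e \<bullet> (\<Sum>i\<in>I. c i *\<^sub>R G i) = e \<bullet> (c k *\<^sub>R G k + (\<Sum>i\<in>I - {k}. c i *\<^sub>R G i))"
    using assms(1,2) by (simp add: sum.remove)
  also have "\<dots> = c k * (G k \<bullet> e)"
    using inner_sum_scaleR_orthogonal[of "I - {k}" G e c] assms(3)
    by (simp add: inner_add_right inner_commute)
  finally show ?thesis .
qed

text \<open>The differentiability hypothesis only identifies G i as the gradient of H i;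
  the argument itself is purely linear-algebraic and does not use it.\<close>

theorem mainTheorem1:
  fixes M :: "real ^'n ^'n"
    and \<phi> :: "real ^'n"
    and H :: "nat \<Rightarrow> real ^'n \<Rightarrow> real"
    and G :: "nat \<Rightarrow> real ^'n"
    and m k :: nat
    and d\<phi> dt\<phi> :: "real ^'n"
    and d\<gamma> dt\<gamma> :: "nat \<Rightarrow> real"
  assumes M: "sym_pos_def_matrix M"
    and H_diff: "\<And>i. i < m \<Longrightarrow> (H i has_derivative (\<lambda>v. G i \<bullet> v)) (at \<phi>)"
    and k: "k < m"
    and sys1_a: "M *v d\<phi> = (\<Sum>i<m. d\<gamma> i *\<^sub>R G i)"
    and sys1_b: "\<And>i. i < m \<Longrightarrow> H i \<phi> + G i \<bullet> d\<phi> = 0"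
    and sys2_a: "M *v dt\<phi> = (\<Sum>i\<in>{..<m} - {k}. dt\<gamma> i *\<^sub>R G i)"
    and sys2_b: "\<And>i. i < m \<Longrightarrow> i \<noteq> k \<Longrightarrow> H i \<phi> + G i \<bullet> dt\<phi> = 0"
  shows "d\<gamma> k * (H k \<phi> + G k \<bullet> dt\<phi>) \<le> 0"
proof -
  define e where "e = d\<phi> - dt\<phi>"
  have orth: "G i \<bullet> e = 0" if "i \<in> {..<m} - {k}" for i
    using sys1_b[of i] sys2_b[of i] that by (simp add: e_def inner_diff_right)
  have "e \<bullet> (M *v e) = e \<bullet> (M *v d\<phi>) - e \<bullet> (M *v dt\<phi>)"
    by (simp add: e_def matrix_vector_mult_diff_distrib inner_diff_right)
  also have "\<dots> = d\<gamma> k * (G k \<bullet> e)"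
    using k orth sys1_a sys2_a inner_sum_scaleR_orthogonal_except[of "{..<m}" k G e d\<gamma>]
      inner_sum_scaleR_orthogonal[of "{..<m} - {k}" G e dt\<gamma>]
    by simp
  also have "G k \<bullet> e = - (H k \<phi> + G k \<bullet> dt\<phi>)"
    using sys1_b[OF k] by (simp add: e_def inner_diff_right)
  finally have "e \<bullet> (M *v e) = - (d\<gamma> k * (H k \<phi> + G k \<bullet> dt\<phi>))"
    by (simp add: algebra_simps)
  with sym_pos_def_matrix_quadratic_form_nonneg[OF M, of e] show ?thesis
    by linarith
qed

end
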